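(* In the setting of the context, let $\phi:F(G)\to\coprod_A G_\lambda$ be the unique homomorphism with $\phi(g)=g$ for all $g\in G$ (it is surjective and $1$-Lipschitz from $(F(G),d_F)$ to $(\coprod_A G_\lambda,\underline d)$), let $\mathfrak N=\ker\phi$, and let $d_0$ be the factor metric on $F(G)/\mathfrak N$. Then the isomorphism $F(G)/\mathfrak N\to\coprod_A G_\lambda$ induced by $\phi$ is an isometry from $(F(G)/\mathfrak N,d_0)$ onto $(\coprod_A G_\lambda,\underline d)$.
   Context: Setting: $(G_\lambda,d_\lambda)_{\lambda\in\Lambda}$ are groups with two-sided invariant metrics, $A$ is a common subgroup closed in every $G_\lambda$, $G_{\lambda_1}\cap G_{\lambda_2}=A$ for $\lambda_1\ne\lambda_2$, all $d_\lambda$ agree on $A$; $G=\bigcup_\lambda G_\lambda$ with the amalgam metric $d$ ($d=d_\lambda$ on $G_\lambda$; $d(f_1,f_2)=\inf_{a\in A}\{d_{\lambda_1}(f_1,a)+d_{\lambda_2}(a,f_2)\}$ if $f_1\in G_{\lambda_1}$, $f_2\in G_{\lambda_2}$ are not in a common $G_\lambda$), and $\underline d$ is the Graev metric on $\coprod_A G_\lambda$: $\underline d(f_1,f_2)=\inf\{\sum_i d(\alpha_1(i),\alpha_2(i)) : |\alpha_1|=|\alpha_2|,\ \hat\alpha_i=f_i\}$ over words in the alphabet $G$, $\hat\alpha$ being the product of the letters. Graev metric on free groups: for a pointed metric space $(X,e,d)$, let $X^{-1}$ be a set of formal inverses with $e^{-1}=e$, $X\cap X^{-1}=\{e\}$,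 and $\overline X=X\cup X^{-1}$ with metric $d(x^{-1},y^{-1})=d(x,y)$, $d(x,y^{-1})=d(x,e)+d(e,y)$ for $x,y\in X$. $F(X)$ is the free group on $X\setminus\{e\}$ (with $e$ interpreted as the identity); for a word $u$ over $\overline X$, $\hat u\in F(X)$ is its evaluation. For words $u,v$ of equal length $\rho(u,v)=\sum_i d(u(i),v(i))$, and $d_F(f,g)=\inf\{\rho(u,v):|u|=|v|,\hat u=f,\hat v=g\}$; this is a two-sided invariant metric on $F(X)$. Here $X=G$ pointed at the identity $e$ with the amalgam metric $d$. Factor metric: for a group $H$ with two-sided invariant metric $\delta$ and closed normal subgroup $N$, $d_0(g_1N,g_2N)=\inf\{\delta(g_1h_1,g_2h_2):h_1,h_2\in N\}$. *)

theory Defs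
  imports "HOL-Analysis.Analysis" "HOL-Algebra.Algebra"
begin

text \<open>A letter of the alphabet X-bar is a pair (s, x): (True, x) is x and (False, x) is
  the formal inverse of x. Both (True, e) and (False, e) denote e (distance 0 apart under
  the metric below, consistent with e^-1 = e).\<close>

definition letter_dist :: "('a \<Rightarrow> 'a \<Rightarrow> real) \<Rightarrow> 'a \<Rightarrow> bool \<times> 'a \<Rightarrow> bool \<times> 'a \<Rightarrow> real" where
  "letter_dist d e p q =
     (if fst p = fst q then d (snd p) (snd q) else d (snd p) e + d e (snd q))"

fun free_red :: "(bool \<times> 'a) list \<Rightarrow> (bool \<times> 'a) list" where
  "free_red [] = []"
| "free_red (a # w) =
     (case free_red w of
        [] \<Rightarrow> [a]
      | b # w' \<Rightarrow> (if fst a \<noteq> fst b \<and> snd a = snd b then w' else a # b # w'))"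

definition free_grp :: "'a set \<Rightarrow> 'a \<Rightarrow> (bool \<times> 'a) list monoid" where
  "free_grp Y e =
     \<lparr> carrier = {w. snd ` set w \<subseteq> Y - {e} \<and> free_red w = w},
       monoid.mult = (\<lambda>u v. free_red (u @ v)),
       monoid.one = [] \<rparr>"

definition word_eval :: "'a \<Rightarrow> (bool \<times> 'a) list \<Rightarrow> (bool \<times> 'a) list" where
  "word_eval e u = free_red (filter (\<lambda>p. snd p \<noteq> e) u)"

definition word_rho :: "('a \<Rightarrow> 'a \<Rightarrow> real) \<Rightarrow> 'a \<Rightarrow> (bool \<times> 'a) list \<Rightarrow> (bool \<times> 'a) list \<Rightarrow> real" where
  "word_rho d e u v = (\<Sum>i<length u. letter_dist d e (u ! i) (v ! i))"

definition graev_free ::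
  "'a set \<Rightarrow> 'a \<Rightarrow> ('a \<Rightarrow> 'a \<Rightarrow> real) \<Rightarrow> (bool \<times> 'a) list \<Rightarrow> (bool \<times> 'a) list \<Rightarrow> real" where
  "graev_free Y e d f g =
     Inf {word_rho d e u v | u v. length u = length v \<and>
            snd ` set u \<subseteq> Y \<and> snd ` set v \<subseteq> Y \<and>
            word_eval e u = f \<and> word_eval e v = g}"

definition factor_metric :: "('b \<Rightarrow> 'b \<Rightarrow> real) \<Rightarrow> 'b set \<Rightarrow> 'b set \<Rightarrow> real" where
  "factor_metric \<delta> C1 C2 = Inf {\<delta> x y | x y. x \<in> C1 \<and> y \<in> C2}"

definition amalg_set :: "('i \<Rightarrow> 'a monoid) \<Rightarrow> 'a set" where
  "amalg_set Gs = (\<Union>l. carrier (Gs l))"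

definition amalg_unit :: "('i \<Rightarrow> 'a monoid) \<Rightarrow> 'a" where
  "amalg_unit Gs = \<one>\<^bsub>Gs (SOME l. True)\<^esub>"

definition amalg_dist :: "('i \<Rightarrow> 'a monoid) \<Rightarrow> ('i \<Rightarrow> 'a \<Rightarrow> 'a \<Rightarrow> real) \<Rightarrow> 'a set \<Rightarrow> 'a \<Rightarrow> 'a \<Rightarrow> real" where
  "amalg_dist Gs ds A x y =
     (if \<exists>l. x \<in> carrier (Gs l) \<and> y \<in> carrier (Gs l)
      then ds (SOME l. x \<in> carrier (Gs l) \<and> y \<in> carrier (Gs l)) x y
      else (INF a\<in>A. ds (SOME l. x \<in> carrier (Gs l)) x a + ds (SOME l. y \<in> carrier (Gs l)) a y))"

definition FG :: "('i \<Rightarrow> 'a monoid) \<Rightarrow> (bool \<times> 'a) list monoid" where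
  "FG Gs = free_grp (amalg_set Gs) (amalg_unit Gs)"

definition FG_gen :: "('i \<Rightarrow> 'a monoid) \<Rightarrow> 'a \<Rightarrow> (bool \<times> 'a) list" where
  "FG_gen Gs g = word_eval (amalg_unit Gs) [(True, g)]"

definition amalg_relators :: "('i \<Rightarrow> 'a monoid) \<Rightarrow> (bool \<times> 'a) list set" where
  "amalg_relators Gs =
     {FG_gen Gs g \<otimes>\<^bsub>FG Gs\<^esub> FG_gen Gs h \<otimes>\<^bsub>FG Gs\<^esub> inv\<^bsub>FG Gs\<^esub> (FG_gen Gs (g \<otimes>\<^bsub>Gs l\<^esub> h))
      | g h l. g \<in> carrier (Gs l) \<and> h \<in> carrier (Gs l)}"

definition normal_closure :: "('b, 'm) monoid_scheme \<Rightarrow> 'b set \<Rightarrow> 'b set" where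
  "normal_closure H S = generate H {x \<otimes>\<^bsub>H\<^esub> s \<otimes>\<^bsub>H\<^esub> inv\<^bsub>H\<^esub> x | x s. x \<in> carrier H \<and> s \<in> S}"

text \<open>The amalgamated free product, by its standard presentation:
  generators G minus e, relations g h = (gh) whenever g, h lie in a common G_lambda.\<close>
definition amalg_prod :: "('i \<Rightarrow> 'a monoid) \<Rightarrow> (bool \<times> 'a) list set monoid" where
  "amalg_prod Gs = FG Gs Mod normal_closure (FG Gs) (amalg_relators Gs)"

definition amalg_phi :: "('i \<Rightarrow> 'a monoid) \<Rightarrow> (bool \<times> 'a) list \<Rightarrow> (bool \<times> 'a) list set" where
  "amalg_phi Gs f = normal_closure (FG Gs) (amalg_relators Gs) #>\<^bsub>FG Gs\<^esub> f"

definition amalg_word_prod :: "('i \<Rightarrow> 'a monoid) \<Rightarrow> 'a list \<Rightarrow> (bool \<times> 'a) list set" where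
  "amalg_word_prod Gs \<alpha> =
     foldr (\<lambda>g acc. amalg_phi Gs (FG_gen Gs g) \<otimes>\<^bsub>amalg_prod Gs\<^esub> acc) \<alpha> \<one>\<^bsub>amalg_prod Gs\<^esub>"

definition graev_amalg ::
  "('i \<Rightarrow> 'a monoid) \<Rightarrow> ('i \<Rightarrow> 'a \<Rightarrow> 'a \<Rightarrow> real) \<Rightarrow> 'a set \<Rightarrow>
   (bool \<times> 'a) list set \<Rightarrow> (bool \<times> 'a) list set \<Rightarrow> real" where
  "graev_amalg Gs ds A f1 f2 =
     Inf {(\<Sum>i<length \<alpha>1. amalg_dist Gs ds A (\<alpha>1 ! i) (\<alpha>2 ! i)) | \<alpha>1 \<alpha>2.
            length \<alpha>1 = length \<alpha>2 \<and> set \<alpha>1 \<subseteq> amalg_set Gs \<and> set \<alpha>2 \<subseteq> amalg_set Gs \<and>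
            amalg_word_prod Gs \<alpha>1 = f1 \<and> amalg_word_prod Gs \<alpha>2 = f2}"

definition inv_metric :: "'a monoid \<Rightarrow> ('a \<Rightarrow> 'a \<Rightarrow> real) \<Rightarrow> bool" where
  "inv_metric H \<delta> \<longleftrightarrow>
     (\<forall>x\<in>carrier H. \<forall>y\<in>carrier H. (\<delta> x y = 0 \<longleftrightarrow> x = y) \<and> \<delta> x y = \<delta> y x) \<and>
     (\<forall>x\<in>carrier H. \<forall>y\<in>carrier H. \<forall>z\<in>carrier H. \<delta> x z \<le> \<delta> x y + \<delta> y z) \<and>
     (\<forall>g\<in>carrier H. \<forall>x\<in>carrier H. \<forall>y\<in>carrier H.
        \<delta> (g \<otimes>\<^bsub>H\<^esub> x) (g \<otimes>\<^bsub>H\<^esub> y) = \<delta> x y \<and> \<delta> (x \<otimes>\<^bsub>H\<^esub> g) (y \<otimes>\<^bsub>H\<^esub> g) = \<delta> x y)"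

definition metric_closed_in :: "'a set \<Rightarrow> ('a \<Rightarrow> 'a \<Rightarrow> real) \<Rightarrow> 'a set \<Rightarrow> bool" where
  "metric_closed_in S \<delta> A \<longleftrightarrow>
     (\<forall>x\<in>S. (\<forall>\<epsilon>>0. \<exists>a\<in>A. \<delta> x a < \<epsilon>) \<longrightarrow> x \<in> A)"

end

theory Submission
  imports Defs
begin

text \<open>
  The amalgamated free product of the groups G_l over A is presented as the quotient of the
  free group F(G) by the normal closure N of the relators g h (gh)^-1. Hence the map phi is the
  quotient map, its kernel is N, and the induced isomorphism F(G)/N to the amalgamated product
  is the identity on cosets. The content of the theorem is the isometry: the Graev metric of
  the amalgamated product, an infimum over pairs of words over G, equals the factor metric of
  the Graev metric d_F, an infimum over pairs of words over G and its formal inverses.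
\<close>

section \<open>Free reduction of words\<close>

fun push :: "bool \<times> 'a \<Rightarrow> (bool \<times> 'a) list \<Rightarrow> (bool \<times> 'a) list" where
  "push a [] = [a]"
| "push a (b # w) = (if fst a \<noteq> fst b \<and> snd a = snd b then w else a # b # w)"

lemma free_red_Cons: "free_red (a # w) = push a (free_red w)"
  by (cases "free_red w") auto

declare free_red.simps(2)[simp del] free_red_Cons[simp]

lemma free_red_append: "free_red (u @ v) = foldr push u (free_red v)"
  by (induction u) simp_all

fun reduced_word :: "(bool \<times> 'a) list \<Rightarrow> bool" where
  "reduced_word [] = True"
| "reduced_word [a] = True"
| "reduced_word (a # b # w) = (\<not> (fst a \<noteq> fst b \<and> snd a = snd b) \<and> reduced_word (b # w))"

lemma reduced_tl: "reduced_word (a # w) \<Longrightarrow> reduced_word w"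
  by (cases w) auto

lemma reduced_push: "reduced_word w \<Longrightarrow> reduced_word (push a w)"
  by (cases w) (auto dest: reduced_tl)

lemma reduced_foldr_push: "reduced_word z \<Longrightarrow> reduced_word (foldr push u z)"
  by (induction u) (auto simp: reduced_push)

lemma reduced_free_red: "reduced_word (free_red w)"
  using reduced_foldr_push[of "[]" w] free_red_append[of w "[]"] by simp

lemma push_reduced: "reduced_word (a # w) \<Longrightarrow> push a w = a # w"
  by (cases w) auto

lemma free_red_reduced: "reduced_word w \<Longrightarrow> free_red w = w"
proof (induction w)
  case (Cons a w)
  then show ?case using push_reduced reduced_tl by fastforce
qed simp

lemma free_red_idem: "free_red (free_red w) = free_red w"
  by (rule free_red_reduced[OF reduced_free_red])

lemma push_cancel:
  assumes "reduced_word w" and "fst a \<noteq> fst b" and "snd a = snd b"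
  shows "push a (push b w) = w"
proof (cases w)
  case (Cons c w')
  show ?thesis
  proof (cases "fst b \<noteq> fst c \<and> snd b = snd c")
    case True
    then have "c = a" using assms(2,3) by (cases a, cases c) auto
    then show ?thesis using True Cons assms(1) push_reduced by simp
  qed (use Cons assms(2,3) in auto)
qed (use assms(2,3) in auto)

lemma foldr_push_free_red: "reduced_word z \<Longrightarrow> foldr push u z = foldr push (free_red u) z"
proof (induction u)
  case (Cons a u)
  have "push a (foldr push r z) = foldr push (push a r) z" for r
  proof (cases r)
    case (Cons b r')
    then show ?thesis
      using push_cancel[OF reduced_foldr_push[OF Cons.prems]] by auto
  qed simp
  then show ?case using Cons by simp
qed simp

lemma free_red_left: "free_red (free_red u @ v) = free_red (u @ v)"
  by (simp add: free_red_append foldr_push_free_red[OF reduced_free_red, symmetric] free_red_idem)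

lemma free_red_right: "free_red (u @ free_red v) = free_red (u @ v)"
  by (simp add: free_red_append free_red_idem)

lemma set_free_red: "set (free_red w) \<subseteq> set w"
proof (induction w)
  case (Cons a w)
  have "set (push a r) \<subseteq> insert a (set r)" for r by (cases r) auto
  then show ?case using Cons by auto
qed simp

definition word_inv :: "(bool \<times> 'a) list \<Rightarrow> (bool \<times> 'a) list" where
  "word_inv w = rev (map (\<lambda>(s, x). (\<not> s, x)) w)"

lemma free_red_word_inv: "free_red (word_inv w @ w) = []"
proof (induction w rule: rev_induct)
  case (snoc a w)
  obtain s x where a: "a = (s, x)" by force
  have "free_red (word_inv (w @ [a]) @ w @ [a]) = push (\<not> s, x) (free_red (word_inv w @ w @ [a]))"
    by (simp add: word_inv_def a)
  also have "free_red (word_inv w @ w @ [a]) = foldr push (word_inv w @ w) [a]"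
    by (simp add: free_red_append)
  also have "\<dots> = foldr push (free_red (word_inv w @ w)) [a]"
    by (rule foldr_push_free_red) simp
  finally show ?case using snoc a by simp
qed (simp add: word_inv_def)

lemma set_word_inv: "snd ` set (word_inv w) = snd ` set w"
  by (force simp: word_inv_def)

lemma free_grp_group: "group (free_grp Y e)"
proof (rule groupI)
  fix x y assume "x \<in> carrier (free_grp Y e)" "y \<in> carrier (free_grp Y e)"
  then show "x \<otimes>\<^bsub>free_grp Y e\<^esub> y \<in> carrier (free_grp Y e)"
    using set_free_red[of "x @ y"] by (fastforce simp: free_grp_def free_red_idem)
next
  fix x assume x: "x \<in> carrier (free_grp Y e)"
  show "\<exists>y\<in>carrier (free_grp Y e). y \<otimes>\<^bsub>free_grp Y e\<^esub> x = \<one>\<^bsub>free_grp Y e\<^esub>"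
  proof
    show "free_red (word_inv x) \<otimes>\<^bsub>free_grp Y e\<^esub> x = \<one>\<^bsub>free_grp Y e\<^esub>"
      using free_red_word_inv[of x] by (simp add: free_grp_def free_red_left)
    show "free_red (word_inv x) \<in> carrier (free_grp Y e)"
      using x set_word_inv[of x] set_free_red[of "word_inv x"]
      by (auto simp: free_grp_def free_red_idem)
  qed
qed (auto simp: free_grp_def free_red_left free_red_right)

section \<open>Two-sided invariant metrics on groups\<close>

context
  fixes H :: "'a monoid" and \<delta> :: "'a \<Rightarrow> 'a \<Rightarrow> real"
  assumes metric: "inv_metric H \<delta>"
begin

lemma inv_metric_zero: "x \<in> carrier H \<Longrightarrow> \<delta> x x = 0"
  using metric unfolding inv_metric_def by blast

lemma inv_metric_sym: "x \<in> carrier H \<Longrightarrow> y \<in> carrier H \<Longrightarrow> \<delta> x y = \<delta> y x"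
  using metric unfolding inv_metric_def by blast

lemma inv_metric_triangle:
  "x \<in> carrier H \<Longrightarrow> y \<in> carrier H \<Longrightarrow> z \<in> carrier H \<Longrightarrow> \<delta> x z \<le> \<delta> x y + \<delta> y z"
  using metric unfolding inv_metric_def by blast

lemma inv_metric_nonneg: "x \<in> carrier H \<Longrightarrow> y \<in> carrier H \<Longrightarrow> 0 \<le> \<delta> x y"
  using inv_metric_triangle[of x y x] inv_metric_zero[of x] inv_metric_sym[of x y] by linarith

lemma inv_metric_left:
  "g \<in> carrier H \<Longrightarrow> x \<in> carrier H \<Longrightarrow> y \<in> carrier H \<Longrightarrow> \<delta> (g \<otimes>\<^bsub>H\<^esub> x) (g \<otimes>\<^bsub>H\<^esub> y) = \<delta> x y"
  using metric unfolding inv_metric_def by blast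

lemma inv_metric_right:
  "g \<in> carrier H \<Longrightarrow> x \<in> carrier H \<Longrightarrow> y \<in> carrier H \<Longrightarrow> \<delta> (x \<otimes>\<^bsub>H\<^esub> g) (y \<otimes>\<^bsub>H\<^esub> g) = \<delta> x y"
  using metric unfolding inv_metric_def by blast

text \<open>Inversion is an isometry: translate by x on the left and by y on the right.\<close>
lemma inv_metric_inv:
  assumes "group H" and x: "x \<in> carrier H" and y: "y \<in> carrier H"
  shows "\<delta> (inv\<^bsub>H\<^esub> x) (inv\<^bsub>H\<^esub> y) = \<delta> x y"
proof -
  interpret group H by (rule assms(1))
  have "\<delta> (inv\<^bsub>H\<^esub> x) (inv\<^bsub>H\<^esub> y) = \<delta> (x \<otimes>\<^bsub>H\<^esub> inv\<^bsub>H\<^esub> x) (x \<otimes>\<^bsub>H\<^esub> inv\<^bsub>H\<^esub> y)"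
    using x y by (simp only: inv_metric_left inv_closed)
  also have "\<dots> = \<delta> (x \<otimes>\<^bsub>H\<^esub> inv\<^bsub>H\<^esub> x \<otimes>\<^bsub>H\<^esub> y) (x \<otimes>\<^bsub>H\<^esub> inv\<^bsub>H\<^esub> y \<otimes>\<^bsub>H\<^esub> y)"
    using x y by (simp only: inv_metric_right m_closed inv_closed)
  also have "\<dots> = \<delta> y x" using x y by (simp add: m_assoc)
  finally show ?thesis using x y inv_metric_sym by simp
qed

end

section \<open>The amalgam metric\<close>

text \<open>The setting of the theorem.\<close>
locale amalg =
  fixes Gs :: "'i \<Rightarrow> 'a monoid"
    and ds :: "'i \<Rightarrow> 'a \<Rightarrow> 'a \<Rightarrow> real"
    and A :: "'a set"
  assumes groups: "\<And>l. group (Gs l)"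
    and metrics: "\<And>l. inv_metric (Gs l) (ds l)"
    and subgrp: "\<And>l. subgroup A (Gs l)"
    and common_mult: "\<And>l1 l2 a b. a \<in> A \<Longrightarrow> b \<in> A \<Longrightarrow> a \<otimes>\<^bsub>Gs l1\<^esub> b = a \<otimes>\<^bsub>Gs l2\<^esub> b"
    and inter: "\<And>l1 l2. l1 \<noteq> l2 \<Longrightarrow> carrier (Gs l1) \<inter> carrier (Gs l2) = A"
    and agree: "\<And>l1 l2 a b. a \<in> A \<Longrightarrow> b \<in> A \<Longrightarrow> ds l1 a b = ds l2 a b"
begin

abbreviation "e \<equiv> amalg_unit Gs"
abbreviation "d \<equiv> amalg_dist Gs ds A"
abbreviation "GG \<equiv> amalg_set Gs"

lemma A_sub: "A \<subseteq> carrier (Gs l)"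
  by (rule subgroup.subset[OF subgrp])

lemma one_eq: "\<one>\<^bsub>Gs l\<^esub> = e"
proof -
  define l0 where "l0 = (SOME l::'i. True)"
  interpret g: group "Gs l" by (rule groups)
  interpret g0: group "Gs l0" by (rule groups)
  have A0: "\<one>\<^bsub>Gs l0\<^esub> \<in> A" by (rule subgroup.one_closed[OF subgrp])
  then have x: "\<one>\<^bsub>Gs l0\<^esub> \<in> carrier (Gs l)" using A_sub by blast
  have "\<one>\<^bsub>Gs l0\<^esub> \<otimes>\<^bsub>Gs l\<^esub> \<one>\<^bsub>Gs l0\<^esub> = \<one>\<^bsub>Gs l0\<^esub> \<otimes>\<^bsub>Gs l\<^esub> \<one>\<^bsub>Gs l\<^esub>"
    using common_mult[OF A0 A0, of l l0] x by simp
  then have "\<one>\<^bsub>Gs l0\<^esub> = \<one>\<^bsub>Gs l\<^esub>" using x by (rule g.l_cancel) (simp_all add: x)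
  then show ?thesis by (simp add: amalg_unit_def l0_def)
qed

lemma e_A: "e \<in> A"
  using subgroup.one_closed[OF subgrp] one_eq by metis

lemma e_carr: "e \<in> carrier (Gs l)"
  using e_A A_sub by blast

lemma carr_G: "x \<in> carrier (Gs l) \<Longrightarrow> x \<in> GG"
  by (auto simp: amalg_set_def)

lemma G_ex: "x \<in> GG \<Longrightarrow> x \<in> carrier (Gs (SOME l. x \<in> carrier (Gs l)))"
  by (auto simp: amalg_set_def intro: someI)

lemma inv_common:
  assumes g1: "g \<in> carrier (Gs l1)" and g2: "g \<in> carrier (Gs l2)"
  shows "inv\<^bsub>Gs l1\<^esub> g = inv\<^bsub>Gs l2\<^esub> g"
proof (cases "l1 = l2")
  case False
  then have gA: "g \<in> A" using g1 g2 inter by blast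
  interpret g1: group "Gs l1" by (rule groups)
  interpret g2: group "Gs l2" by (rule groups)
  have iA: "inv\<^bsub>Gs l1\<^esub> g \<in> A" using gA by (rule subgroup.m_inv_closed[OF subgrp])
  have "inv\<^bsub>Gs l1\<^esub> g \<otimes>\<^bsub>Gs l2\<^esub> g = \<one>\<^bsub>Gs l2\<^esub>"
    using common_mult[OF iA gA, of l2 l1] g1 one_eq by simp
  then show ?thesis
    using iA A_sub g2 by (intro g2.inv_equality[symmetric]) auto
qed simp

lemma ds_common:
  "x \<in> carrier (Gs l1) \<Longrightarrow> y \<in> carrier (Gs l1) \<Longrightarrow> x \<in> carrier (Gs l2) \<Longrightarrow> y \<in> carrier (Gs l2) \<Longrightarrow>
   ds l1 x y = ds l2 x y"
  using inter agree by (cases "l1 = l2") blast+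

lemma d_eq:
  assumes "x \<in> carrier (Gs l)" "y \<in> carrier (Gs l)"
  shows "d x y = ds l x y"
proof -
  have ex: "\<exists>l. x \<in> carrier (Gs l) \<and> y \<in> carrier (Gs l)" using assms by blast
  define l' where "l' = (SOME l. x \<in> carrier (Gs l) \<and> y \<in> carrier (Gs l))"
  have "x \<in> carrier (Gs l') \<and> y \<in> carrier (Gs l')"
    unfolding l'_def using someI_ex[OF ex] .
  then have "ds l' x y = ds l x y" using assms by (intro ds_common) auto
  then show ?thesis using ex by (simp add: amalg_dist_def l'_def)
qed

lemma d_split:
  assumes x: "x \<in> carrier (Gs lx)" and y: "y \<in> carrier (Gs ly)"
    and nc: "\<not> (\<exists>l. x \<in> carrier (Gs l) \<and> y \<in> carrier (Gs l))"
  shows "d x y = (INF a\<in>A. ds lx x a + ds ly a y)"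
proof -
  have x': "x \<in> carrier (Gs (SOME l. x \<in> carrier (Gs l)))" using x by (rule someI)
  have y': "y \<in> carrier (Gs (SOME l. y \<in> carrier (Gs l)))" using y by (rule someI)
  have "ds (SOME l. x \<in> carrier (Gs l)) x a + ds (SOME l. y \<in> carrier (Gs l)) a y =
        ds lx x a + ds ly a y" if "a \<in> A" for a
  proof -
    have "a \<in> carrier (Gs l)" for l using that A_sub by blast
    then show ?thesis using ds_common[OF x' _ x, of a] ds_common[OF _ y' _ y, of a] by simp
  qed
  then show ?thesis using nc by (auto simp: amalg_dist_def intro: INF_cong)
qed

lemma d_split_le:
  assumes x: "x \<in> carrier (Gs lx)" and y: "y \<in> carrier (Gs ly)"
    and nc: "\<not> (\<exists>l. x \<in> carrier (Gs l) \<and> y \<in> carrier (Gs l))" and a: "a \<in> A"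
  shows "d x y \<le> ds lx x a + ds ly a y"
proof -
  have "(INF a\<in>A. ds lx x a + ds ly a y) \<le> ds lx x a + ds ly a y"
    using a x y A_sub
    by (intro cINF_lower bdd_belowI2[where m=0] add_nonneg_nonneg inv_metric_nonneg[OF metrics]) auto
  then show ?thesis using d_split[OF x y nc] by simp
qed

lemma d_nonneg:
  assumes x: "x \<in> GG" and y: "y \<in> GG"
  shows "0 \<le> d x y"
proof (cases "\<exists>l. x \<in> carrier (Gs l) \<and> y \<in> carrier (Gs l)")
  case True
  then show ?thesis using d_eq inv_metric_nonneg[OF metrics] by metis
next
  case False
  then show ?thesis using G_ex[OF x] G_ex[OF y] e_A A_sub
    by (subst d_split[OF G_ex[OF x] G_ex[OF y] False])
       (auto intro!: cINF_greatest add_nonneg_nonneg inv_metric_nonneg[OF metrics])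
qed

text \<open>The triangle inequality through the base point e, which is what a pair of letters of
  opposite signs costs in the free-group metric.\<close>
lemma d_through_e:
  assumes x: "x \<in> carrier (Gs lx)" and y: "y \<in> carrier (Gs ly)"
  shows "d x y \<le> ds lx x e + ds ly e y"
proof (cases "\<exists>l. x \<in> carrier (Gs l) \<and> y \<in> carrier (Gs l)")
  case True
  then obtain l where l: "x \<in> carrier (Gs l)" "y \<in> carrier (Gs l)" by blast
  have "d x y = ds l x y" using d_eq l by blast
  also have "\<dots> \<le> ds l x e + ds l e y" using inv_metric_triangle[OF metrics] l e_carr by blast
  also have "\<dots> = ds lx x e + ds ly e y"
    using ds_common[of x l e lx] ds_common[of e l y ly] l x y e_carr by simp
  finally show ?thesis .
qed (use d_split_le[OF x y _ e_A] in simp)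

definition ginv :: "'a \<Rightarrow> 'a" where
  "ginv g = inv\<^bsub>Gs (SOME l. g \<in> carrier (Gs l))\<^esub> g"

lemma ginv_eq: "g \<in> carrier (Gs l) \<Longrightarrow> ginv g = inv\<^bsub>Gs l\<^esub> g"
  unfolding ginv_def by (rule inv_common[OF someI])

lemma ginv_carr: "g \<in> carrier (Gs l) \<Longrightarrow> ginv g \<in> carrier (Gs l)"
  by (simp add: ginv_eq group.inv_closed[OF groups])

text \<open>Since ginv is an involution, g and its inverse lie in the same factors.\<close>
lemma ginv_carr_iff: "g \<in> GG \<Longrightarrow> ginv g \<in> carrier (Gs l) \<longleftrightarrow> g \<in> carrier (Gs l)"
  using ginv_carr[of "ginv g" l] ginv_carr[of g l] G_ex[of g]
    ginv_eq[OF G_ex[of g]] ginv_eq[OF ginv_carr[OF G_ex[of g]]] group.inv_inv[OF groups]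
  by metis

lemma ginv_e: "ginv e = e"
  using ginv_eq[OF e_carr] one_eq monoid.inv_one[OF group.is_monoid[OF groups]] by metis

text \<open>On a common factor this is the invariance
  of that factor's metric; across factors, inverting a path through a in A gives a path
  through the inverse of a of the same length.\<close>
lemma d_ginv:
  assumes g: "g \<in> GG" and h: "h \<in> GG"
  shows "d (ginv g) (ginv h) \<le> d g h"
proof (cases "\<exists>l. g \<in> carrier (Gs l) \<and> h \<in> carrier (Gs l)")
  case True
  then obtain l where l: "g \<in> carrier (Gs l)" "h \<in> carrier (Gs l)" by blast
  have "d (ginv g) (ginv h) = ds l (inv\<^bsub>Gs l\<^esub> g) (inv\<^bsub>Gs l\<^esub> h)"
    using d_eq[OF ginv_carr[OF l(1)] ginv_carr[OF l(2)]] ginv_eq l by simp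
  also have "\<dots> = d g h" using inv_metric_inv[OF metrics groups l] d_eq[OF l] by simp
  finally show ?thesis by simp
next
  case False
  define lg where "lg = (SOME l. g \<in> carrier (Gs l))"
  define lh where "lh = (SOME l. h \<in> carrier (Gs l))"
  have gl: "g \<in> carrier (Gs lg)" using G_ex g lg_def by blast
  have hl: "h \<in> carrier (Gs lh)" using G_ex h lh_def by blast
  have nc: "\<not> (\<exists>l. ginv g \<in> carrier (Gs l) \<and> ginv h \<in> carrier (Gs l))"
    using False ginv_carr_iff g h by blast
  have "d (ginv g) (ginv h) \<le> ds lg g a + ds lh a h" if a: "a \<in> A" for a
  proof -
    have aA: "inv\<^bsub>Gs lg\<^esub> a \<in> A" using a by (rule subgroup.m_inv_closed[OF subgrp])
    have al: "a \<in> carrier (Gs lg)" "a \<in> carrier (Gs lh)" using a A_sub by auto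
    have "d (ginv g) (ginv h) \<le> ds lg (ginv g) (inv\<^bsub>Gs lg\<^esub> a) + ds lh (inv\<^bsub>Gs lg\<^esub> a) (ginv h)"
      using d_split_le[OF ginv_carr[OF gl] ginv_carr[OF hl] nc aA] .
    also have "\<dots> = ds lg g a + ds lh a h"
      using ginv_eq[OF gl] ginv_eq[OF hl] inv_common[OF al]
        inv_metric_inv[OF metrics groups gl al(1)] inv_metric_inv[OF metrics groups al(2) hl]
      by simp
    finally show ?thesis .
  qed
  then have "d (ginv g) (ginv h) \<le> (INF a\<in>A. ds lg g a + ds lh a h)"
    using e_A by (intro cINF_greatest) auto
  then show ?thesis using d_split[OF gl hl False] by simp
qed

definition letter_val :: "bool \<times> 'a \<Rightarrow> 'a" where
  "letter_val p = (if fst p then snd p else ginv (snd p))"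

lemma letter_val_G: "snd p \<in> GG \<Longrightarrow> letter_val p \<in> GG"
  using carr_G[OF ginv_carr[OF G_ex]] by (auto simp: letter_val_def)

lemma letter_dist_ge:
  assumes p: "snd p \<in> GG" and q: "snd q \<in> GG"
  shows "d (letter_val p) (letter_val q) \<le> letter_dist d e p q"
proof -
  obtain s g t h where pp: "p = (s, g)" and qq: "q = (t, h)" by force
  define lg where "lg = (SOME l. g \<in> carrier (Gs l))"
  define lh where "lh = (SOME l. h \<in> carrier (Gs l))"
  have gl: "g \<in> carrier (Gs lg)" using G_ex p pp lg_def by auto
  have hl: "h \<in> carrier (Gs lh)" using G_ex q qq lh_def by auto
  have dge: "d g e = ds lg g e" "d g e = ds lg (ginv g) e"
    using d_eq[OF gl e_carr] inv_metric_inv[OF metrics groups gl e_carr] ginv_eq[OF gl]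
      ginv_eq[OF e_carr] ginv_e by simp_all
  have deh: "d e h = ds lh e h" "d e h = ds lh e (ginv h)"
    using d_eq[OF e_carr hl] inv_metric_inv[OF metrics groups e_carr hl] ginv_eq[OF hl]
      ginv_eq[OF e_carr] ginv_e by simp_all
  show ?thesis
  proof (cases s; cases t)
    assume "\<not> s" "\<not> t"
    then show ?thesis using pp qq d_ginv p q by (simp add: letter_val_def letter_dist_def)
  qed (use pp qq d_through_e[OF gl ginv_carr[OF hl]] d_through_e[OF ginv_carr[OF gl] hl] dge deh
       in \<open>simp_all add: letter_val_def letter_dist_def\<close>)
qed

end

section \<open>The amalgamated product as a quotient of F(G)\<close>

context amalg
begin

abbreviation "F \<equiv> FG Gs"
abbreviation "N \<equiv> normal_closure F (amalg_relators Gs)"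

lemma carrier_F: "carrier F = {w. snd ` set w \<subseteq> GG - {e} \<and> free_red w = w}"
  by (simp add: FG_def free_grp_def)

lemma mult_F: "x \<otimes>\<^bsub>F\<^esub> y = free_red (x @ y)"
  by (simp add: FG_def free_grp_def)

lemma one_F: "\<one>\<^bsub>F\<^esub> = []"
  by (simp add: FG_def free_grp_def)

lemma group_F: "group F"
  unfolding FG_def by (rule free_grp_group)

lemma word_eval_carr: "snd ` set u \<subseteq> GG \<Longrightarrow> word_eval e u \<in> carrier F"
  using set_free_red[of "filter (\<lambda>p. snd p \<noteq> e) u"]
  by (fastforce simp: carrier_F word_eval_def free_red_idem)

lemma word_eval_id: "x \<in> carrier F \<Longrightarrow> word_eval e x = x"
  unfolding word_eval_def by (subst filter_True) (auto simp: carrier_F)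

lemma word_eval_Cons: "word_eval e (a # u) = word_eval e [a] \<otimes>\<^bsub>F\<^esub> word_eval e u"
  using free_red_right[of "[a]" "filter (\<lambda>p. snd p \<noteq> e) u"]
  by (simp add: mult_F word_eval_def free_red_idem)

lemma gen_carr: "g \<in> GG \<Longrightarrow> FG_gen Gs g \<in> carrier F"
  unfolding FG_gen_def by (rule word_eval_carr) simp

lemma relators_carr: "amalg_relators Gs \<subseteq> carrier F"
proof
  interpret F: group F by (rule group_F)
  fix r assume "r \<in> amalg_relators Gs"
  then obtain g h l where r: "r = FG_gen Gs g \<otimes>\<^bsub>F\<^esub> FG_gen Gs h \<otimes>\<^bsub>F\<^esub> inv\<^bsub>F\<^esub> (FG_gen Gs (g \<otimes>\<^bsub>Gs l\<^esub> h))"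
    and gh: "g \<in> carrier (Gs l)" "h \<in> carrier (Gs l)"
    unfolding amalg_relators_def by blast
  have "g \<otimes>\<^bsub>Gs l\<^esub> h \<in> carrier (Gs l)" using gh group.is_monoid[OF groups] monoid.m_closed by fast
  then show "r \<in> carrier F" unfolding r using gh gen_carr carr_G by simp
qed

lemma normal_N: "N \<lhd> F"
proof -
  interpret F: group F by (rule group_F)
  let ?R = "{x \<otimes>\<^bsub>F\<^esub> s \<otimes>\<^bsub>F\<^esub> inv\<^bsub>F\<^esub> x | x s. x \<in> carrier F \<and> s \<in> amalg_relators Gs}"
  show ?thesis unfolding normal_closure_def
  proof (rule F.normal_generateI)
    show "?R \<subseteq> carrier F" using relators_carr by auto
  next
    fix h g assume "h \<in> ?R" and g: "g \<in> carrier F"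
    then obtain x s where h: "h = x \<otimes>\<^bsub>F\<^esub> s \<otimes>\<^bsub>F\<^esub> inv\<^bsub>F\<^esub> x"
      and x: "x \<in> carrier F" and s: "s \<in> amalg_relators Gs" by blast
    have "g \<otimes>\<^bsub>F\<^esub> h \<otimes>\<^bsub>F\<^esub> inv\<^bsub>F\<^esub> g = (g \<otimes>\<^bsub>F\<^esub> x) \<otimes>\<^bsub>F\<^esub> s \<otimes>\<^bsub>F\<^esub> inv\<^bsub>F\<^esub> (g \<otimes>\<^bsub>F\<^esub> x)"
      using g x s relators_carr by (auto simp: h F.m_assoc F.inv_mult_group)
    then show "g \<otimes>\<^bsub>F\<^esub> h \<otimes>\<^bsub>F\<^esub> inv\<^bsub>F\<^esub> g \<in> ?R" using g x s by blast
  qed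
qed

lemma relators_N: "amalg_relators Gs \<subseteq> N"
proof
  interpret F: group F by (rule group_F)
  fix s assume s: "s \<in> amalg_relators Gs"
  then have "s = \<one>\<^bsub>F\<^esub> \<otimes>\<^bsub>F\<^esub> s \<otimes>\<^bsub>F\<^esub> inv\<^bsub>F\<^esub> \<one>\<^bsub>F\<^esub>" using relators_carr by auto
  then show "s \<in> N" unfolding normal_closure_def using s F.one_closed
    by (intro generate.incl) blast
qed

lemma subgroup_N: "subgroup N F"
  by (rule normal_imp_subgroup[OF normal_N])

lemma kernel_N: "kernel F (amalg_prod Gs) (amalg_phi Gs) = N"
proof -
  interpret F: group F by (rule group_F)
  have "N #>\<^bsub>F\<^esub> x = N \<longleftrightarrow> x \<in> N" if "x \<in> carrier F" for x
    using that F.rcos_self[OF that subgroup_N] F.coset_join2[OF that subgroup_N] by blast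
  then show ?thesis using subgroup.subset[OF subgroup_N]
    by (auto simp: kernel_def amalg_prod_def amalg_phi_def)
qed

lemma phi_mult:
  "x \<in> carrier F \<Longrightarrow> y \<in> carrier F \<Longrightarrow>
   amalg_phi Gs (x \<otimes>\<^bsub>F\<^esub> y) = amalg_phi Gs x \<otimes>\<^bsub>amalg_prod Gs\<^esub> amalg_phi Gs y"
  using normal.rcos_sum[OF normal_N] by (simp add: amalg_phi_def amalg_prod_def)

lemma phi_eq_iff:
  assumes C: "C \<in> carrier (F Mod N)" and x: "x \<in> carrier F"
  shows "amalg_phi Gs x = C \<longleftrightarrow> x \<in> C"
proof -
  interpret F: group F by (rule group_F)
  obtain x0 where x0: "x0 \<in> carrier F" and C_def: "C = N #>\<^bsub>F\<^esub> x0"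
    using C by (auto simp: carrier_FactGroup)
  show ?thesis
    using F.repr_independence[OF _ x0 subgroup_N, of x] F.rcos_self[OF x subgroup_N]
    by (auto simp: amalg_phi_def C_def)
qed

lemma coset_subset:
  assumes "C \<in> carrier (F Mod N)"
  shows "C \<subseteq> carrier F"
  using assms monoid.r_coset_subset_G[OF group.is_monoid[OF group_F] subgroup.subset[OF subgroup_N]]
  by (auto simp: carrier_FactGroup)

text \<open>A negative letter and the generator of the inverse element have the same image under phi,
  because g (g^-1) e^-1 is a relator and e is the identity of F.\<close>
lemma phi_inverse_letter:
  assumes g: "g \<in> GG"
  shows "amalg_phi Gs (word_eval e [(False, g)]) = amalg_phi Gs (FG_gen Gs (ginv g))"
proof -
  interpret F: group F by (rule group_F)
  define l where "l = (SOME l. g \<in> carrier (Gs l))"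
  have gl: "g \<in> carrier (Gs l)" unfolding l_def using g by (rule G_ex)
  have hl: "ginv g \<in> carrier (Gs l)" using gl by (rule ginv_carr)
  have gh: "g \<otimes>\<^bsub>Gs l\<^esub> ginv g = e"
    using ginv_eq[OF gl] group.r_inv[OF groups gl] one_eq by simp
  define x where "x = FG_gen Gs g"
  define y where "y = FG_gen Gs (ginv g)"
  have xc: "x \<in> carrier F" unfolding x_def using g by (rule gen_carr)
  have yc: "y \<in> carrier F" unfolding y_def using carr_G[OF hl] by (rule gen_carr)
  have "x \<otimes>\<^bsub>F\<^esub> y \<otimes>\<^bsub>F\<^esub> inv\<^bsub>F\<^esub> (FG_gen Gs (g \<otimes>\<^bsub>Gs l\<^esub> ginv g)) \<in> amalg_relators Gs"
    unfolding amalg_relators_def x_def y_def using gl hl by blast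
  moreover have "FG_gen Gs e = \<one>\<^bsub>F\<^esub>" by (simp add: FG_gen_def word_eval_def one_F)
  ultimately have xy: "x \<otimes>\<^bsub>F\<^esub> y \<in> N" using gh relators_N xc yc by auto
  have w: "word_eval e [(False, g)] = inv\<^bsub>F\<^esub> x"
  proof (cases "g = e")
    case True
    then show ?thesis using F.inv_one by (simp add: x_def FG_gen_def word_eval_def one_F)
  next
    case False
    have "word_eval e [(False, g)] \<otimes>\<^bsub>F\<^esub> x = \<one>\<^bsub>F\<^esub>" using False
      by (simp add: x_def FG_gen_def word_eval_def mult_F one_F)
    then show ?thesis using g xc by (intro F.inv_equality[symmetric] word_eval_carr) auto
  qed
  have "inv\<^bsub>F\<^esub> x \<otimes>\<^bsub>F\<^esub> (x \<otimes>\<^bsub>F\<^esub> y) = y"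
    using xc yc by (simp add: F.m_assoc[symmetric])
  then have "amalg_phi Gs y = amalg_phi Gs (inv\<^bsub>F\<^esub> x) \<otimes>\<^bsub>amalg_prod Gs\<^esub> amalg_phi Gs (x \<otimes>\<^bsub>F\<^esub> y)"
    using phi_mult[of "inv\<^bsub>F\<^esub> x" "x \<otimes>\<^bsub>F\<^esub> y"] xc yc by simp
  also have "amalg_phi Gs (x \<otimes>\<^bsub>F\<^esub> y) = \<one>\<^bsub>amalg_prod Gs\<^esub>"
    using group.coset_join2[OF group_F _ subgroup_N xy] xc yc
    by (simp add: amalg_phi_def amalg_prod_def)
  also have "amalg_phi Gs (inv\<^bsub>F\<^esub> x) \<otimes>\<^bsub>amalg_prod Gs\<^esub> \<one>\<^bsub>amalg_prod Gs\<^esub> = amalg_phi Gs (inv\<^bsub>F\<^esub> x)"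
    using monoid.r_one[OF group.is_monoid[OF normal.factorgroup_is_group[OF normal_N]]] xc
    by (simp add: amalg_prod_def amalg_phi_def carrier_FactGroup)
  finally show ?thesis using w y_def by simp
qed

lemma word_prod_letter_val:
  "snd ` set u \<subseteq> GG \<Longrightarrow> amalg_word_prod Gs (map letter_val u) = amalg_phi Gs (word_eval e u)"
proof (induction u)
  case Nil
  show ?case using group.coset_mult_one[OF group_F subgroup.subset[OF subgroup_N]]
    by (simp add: amalg_word_prod_def amalg_prod_def amalg_phi_def word_eval_def one_F)
next
  case (Cons a u)
  have a: "snd a \<in> GG" and u: "snd ` set u \<subseteq> GG" using Cons.prems by auto
  have "amalg_phi Gs (FG_gen Gs (letter_val a)) = amalg_phi Gs (word_eval e [a])"
    using phi_inverse_letter[OF a] by (cases a) (auto simp: letter_val_def FG_gen_def)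
  then have "amalg_word_prod Gs (map letter_val (a # u)) =
        amalg_phi Gs (word_eval e [a]) \<otimes>\<^bsub>amalg_prod Gs\<^esub> amalg_phi Gs (word_eval e u)"
    using Cons.IH[OF u] by (simp add: amalg_word_prod_def)
  also have "\<dots> = amalg_phi Gs (word_eval e (a # u))"
    using word_eval_Cons[of a u] phi_mult word_eval_carr a u by simp
  finally show ?case .
qed

end

section \<open>Equality of the Graev metric and the factor metric\<close>

context amalg
begin

abbreviation "dF \<equiv> graev_free GG e d"

definition free_costs :: "(bool \<times> 'a) list \<Rightarrow> (bool \<times> 'a) list \<Rightarrow> real set" where
  "free_costs x y = {word_rho d e u v | u v. length u = length v \<and>
     snd ` set u \<subseteq> GG \<and> snd ` set v \<subseteq> GG \<and> word_eval e u = x \<and> word_eval e v = y}"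

definition amalg_costs :: "(bool \<times> 'a) list set \<Rightarrow> (bool \<times> 'a) list set \<Rightarrow> real set" where
  "amalg_costs C1 C2 = {(\<Sum>i<length \<alpha>1. d (\<alpha>1 ! i) (\<alpha>2 ! i)) | \<alpha>1 \<alpha>2.
     length \<alpha>1 = length \<alpha>2 \<and> set \<alpha>1 \<subseteq> GG \<and> set \<alpha>2 \<subseteq> GG \<and>
     amalg_word_prod Gs \<alpha>1 = C1 \<and> amalg_word_prod Gs \<alpha>2 = C2}"

lemma graev_free_eq: "dF x y = Inf (free_costs x y)"
  by (simp add: graev_free_def free_costs_def)

lemma graev_amalg_eq: "graev_amalg Gs ds A C1 C2 = Inf (amalg_costs C1 C2)"
  by (simp add: graev_amalg_def amalg_costs_def)

lemma free_costs_nonneg: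
  assumes "r \<in> free_costs x y"
  shows "0 \<le> r"
proof -
  obtain u v where r: "r = word_rho d e u v" and l: "length u = length v"
    and su: "snd ` set u \<subseteq> GG" and sv: "snd ` set v \<subseteq> GG"
    using assms unfolding free_costs_def by blast
  have "0 \<le> letter_dist d e (u ! i) (v ! i)" if i: "i < length u" for i
  proof -
    have "snd (u ! i) \<in> GG" "snd (v ! i) \<in> GG"
      using su sv nth_mem[OF i] nth_mem[of i v] i l by auto
    then show ?thesis
      using d_nonneg carr_G[OF e_carr] by (simp add: letter_dist_def add_nonneg_nonneg)
  qed
  then show ?thesis unfolding r word_rho_def by (intro sum_nonneg) simp
qed

lemma amalg_costs_nonneg:
  assumes "s \<in> amalg_costs C1 C2"
  shows "0 \<le> s"
proof -
  obtain \<alpha>1 \<alpha>2 where s: "s = (\<Sum>i<length \<alpha>1. d (\<alpha>1 ! i) (\<alpha>2 ! i))"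
    and l: "length \<alpha>1 = length \<alpha>2" and a1: "set \<alpha>1 \<subseteq> GG" and a2: "set \<alpha>2 \<subseteq> GG"
    using assms unfolding amalg_costs_def by blast
  have "0 \<le> d (\<alpha>1 ! i) (\<alpha>2 ! i)" if i: "i < length \<alpha>1" for i
    using a1 a2 nth_mem[OF i] nth_mem[of i \<alpha>2] i l by (intro d_nonneg) auto
  then show ?thesis unfolding s by (intro sum_nonneg) simp
qed

lemma bdd_below_free_costs: "bdd_below (free_costs x y)"
  using free_costs_nonneg by (rule bdd_belowI)

lemma bdd_below_amalg_costs: "bdd_below (amalg_costs C1 C2)"
  using amalg_costs_nonneg by (rule bdd_belowI)

text \<open>Two elements of F(G) are represented by words of equal length: pad each with letters e.\<close>
lemma free_costs_ne:
  assumes x: "x \<in> carrier F" and y: "y \<in> carrier F"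
  shows "free_costs x y \<noteq> {}"
proof -
  define u where "u = x @ replicate (length y) (True, e)"
  define v where "v = replicate (length x) (True, e) @ y"
  have "length u = length v" by (simp add: u_def v_def)
  moreover have "snd ` set u \<subseteq> GG" "snd ` set v \<subseteq> GG"
    using x y carr_G[OF e_carr] by (auto simp: u_def v_def carrier_F)
  moreover have "word_eval e u = x" "word_eval e v = y"
    using word_eval_id[OF x] word_eval_id[OF y] by (simp_all add: u_def v_def word_eval_def)
  ultimately show ?thesis unfolding free_costs_def by blast
qed

lemma graev_free_nonneg: "x \<in> carrier F \<Longrightarrow> y \<in> carrier F \<Longrightarrow> 0 \<le> dF x y"
  unfolding graev_free_eq by (intro cInf_greatest free_costs_ne free_costs_nonneg)

lemma factor_metric_le_graev_free:
  assumes C1: "C1 \<in> carrier (F Mod N)" and C2: "C2 \<in> carrier (F Mod N)"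
    and x: "x \<in> C1" and y: "y \<in> C2"
  shows "factor_metric dF C1 C2 \<le> dF x y"
  unfolding factor_metric_def
proof (rule cInf_lower)
  show "dF x y \<in> {dF x y | x y. x \<in> C1 \<and> y \<in> C2}" using x y by blast
  show "bdd_below {dF x y | x y. x \<in> C1 \<and> y \<in> C2}"
    using graev_free_nonneg coset_subset[OF C1] coset_subset[OF C2]
    by (intro bdd_belowI[where m=0]) blast
qed

text \<open>Replacing each letter of a pair of words by the element of G it denotes turns a
  representation of x and y in F(G) into a representation of their images in the amalgamated
  product, of no larger cost.\<close>
lemma amalg_cost_below_free_cost:
  assumes C1: "C1 \<in> carrier (F Mod N)" and C2: "C2 \<in> carrier (F Mod N)"
    and x: "x \<in> C1" and y: "y \<in> C2" and r: "r \<in> free_costs x y"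
  shows "\<exists>s\<in>amalg_costs C1 C2. s \<le> r"
proof -
  obtain u v where r_def: "r = word_rho d e u v" and l: "length u = length v"
    and su: "snd ` set u \<subseteq> GG" and sv: "snd ` set v \<subseteq> GG"
    and eu: "word_eval e u = x" and ev: "word_eval e v = y"
    using r unfolding free_costs_def by blast
  have "amalg_word_prod Gs (map letter_val u) = C1"
    using word_prod_letter_val[OF su] phi_eq_iff[OF C1 word_eval_carr[OF su]] eu x by simp
  moreover have "amalg_word_prod Gs (map letter_val v) = C2"
    using word_prod_letter_val[OF sv] phi_eq_iff[OF C2 word_eval_carr[OF sv]] ev y by simp
  moreover have "set (map letter_val u) \<subseteq> GG" "set (map letter_val v) \<subseteq> GG"
    using su sv letter_val_G by auto
  ultimately have "(\<Sum>i<length u. d (letter_val (u ! i)) (letter_val (v ! i))) \<in> amalg_costs C1 C2"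
    unfolding amalg_costs_def using l
    by (intro CollectI exI[of _ "map letter_val u"] exI[of _ "map letter_val v"]) simp
  moreover have "(\<Sum>i<length u. d (letter_val (u ! i)) (letter_val (v ! i))) \<le> r"
    unfolding r_def word_rho_def
    using su sv l by (intro sum_mono letter_dist_ge) (auto simp: set_conv_nth)
  ultimately show ?thesis by blast
qed

lemma graev_amalg_le_graev_free:
  assumes C1: "C1 \<in> carrier (F Mod N)" and C2: "C2 \<in> carrier (F Mod N)"
    and x: "x \<in> C1" and y: "y \<in> C2"
  shows "graev_amalg Gs ds A C1 C2 \<le> dF x y"
  unfolding graev_free_eq graev_amalg_eq
proof (rule cInf_greatest)
  show "free_costs x y \<noteq> {}"
    using free_costs_ne coset_subset[OF C1] coset_subset[OF C2] x y by blast
next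
  fix r assume "r \<in> free_costs x y"
  then obtain s where "s \<in> amalg_costs C1 C2" "s \<le> r"
    using amalg_cost_below_free_cost[OF C1 C2 x y] by blast
  then show "Inf (amalg_costs C1 C2) \<le> r"
    using cInf_lower[OF _ bdd_below_amalg_costs, of s C1 C2] by linarith
qed

text \<open>Conversely, a word pair over G representing C1 and C2, read as a pair of positive words,
  represents elements of C1 and C2 in F(G) at the same cost.\<close>
lemma factor_metric_le_amalg_cost:
  assumes C1: "C1 \<in> carrier (F Mod N)" and C2: "C2 \<in> carrier (F Mod N)"
    and s: "s \<in> amalg_costs C1 C2"
  shows "factor_metric dF C1 C2 \<le> s"
proof -
  obtain \<alpha>1 \<alpha>2 where s_def: "s = (\<Sum>i<length \<alpha>1. d (\<alpha>1 ! i) (\<alpha>2 ! i))"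
    and l: "length \<alpha>1 = length \<alpha>2" and a1: "set \<alpha>1 \<subseteq> GG" and a2: "set \<alpha>2 \<subseteq> GG"
    and p1: "amalg_word_prod Gs \<alpha>1 = C1" and p2: "amalg_word_prod Gs \<alpha>2 = C2"
    using s unfolding amalg_costs_def by blast
  define u where "u = map (Pair True) \<alpha>1"
  define v where "v = map (Pair True) \<alpha>2"
  have l': "length u = length v" using l by (simp add: u_def v_def)
  have su: "snd ` set u \<subseteq> GG" and sv: "snd ` set v \<subseteq> GG" using a1 a2 by (auto simp: u_def v_def)
  have "map letter_val u = \<alpha>1" "map letter_val v = \<alpha>2"
    by (simp_all add: u_def v_def letter_val_def comp_def)
  then have xC: "word_eval e u \<in> C1" and yC: "word_eval e v \<in> C2"
    using word_prod_letter_val[OF su] word_prod_letter_val[OF sv] p1 p2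
      phi_eq_iff[OF C1 word_eval_carr[OF su]] phi_eq_iff[OF C2 word_eval_carr[OF sv]] by auto
  have "word_rho d e u v \<in> free_costs (word_eval e u) (word_eval e v)"
    unfolding free_costs_def using l' su sv by blast
  moreover have "word_rho d e u v = s"
    unfolding s_def word_rho_def using l by (simp add: u_def v_def letter_dist_def)
  ultimately have "dF (word_eval e u) (word_eval e v) \<le> s"
    unfolding graev_free_eq using cInf_lower[OF _ bdd_below_free_costs] by blast
  then show ?thesis using factor_metric_le_graev_free[OF C1 C2 xC yC] by simp
qed

lemma graev_amalg_eq_factor_metric:
  assumes C1: "C1 \<in> carrier (F Mod N)" and C2: "C2 \<in> carrier (F Mod N)"
  shows "graev_amalg Gs ds A C1 C2 = factor_metric dF C1 C2"
proof (rule antisym)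
  obtain x y where x: "x \<in> C1" and y: "y \<in> C2"
    using C1 C2 group.rcos_self[OF group_F _ subgroup_N] by (auto simp: carrier_FactGroup)
  show "graev_amalg Gs ds A C1 C2 \<le> factor_metric dF C1 C2"
    unfolding factor_metric_def using x y graev_amalg_le_graev_free[OF C1 C2]
    by (intro cInf_greatest) auto
  obtain r where "r \<in> free_costs x y"
    using free_costs_ne coset_subset[OF C1] coset_subset[OF C2] x y by blast
  then have "amalg_costs C1 C2 \<noteq> {}"
    using amalg_cost_below_free_cost[OF C1 C2 x y] by blast
  then show "factor_metric dF C1 C2 \<le> graev_amalg Gs ds A C1 C2"
    unfolding graev_amalg_eq using factor_metric_le_amalg_cost[OF C1 C2] by (rule cInf_greatest)
qed

end

lemma iso_identity_on_carrier:
  assumes "monoid G" and f: "\<And>x. x \<in> carrier G \<Longrightarrow> f x = x"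
  shows "f \<in> iso G G"
proof -
  have "bij_betw f (carrier G) (carrier G)"
    using bij_betw_cong[of "carrier G" f id] f by simp
  moreover have "f \<in> hom G G"
    using f monoid.m_closed[OF assms(1)] by (auto simp: hom_def)
  ultimately show ?thesis by (simp add: iso_def)
qed

context amalg
begin

lemma induced_iso_id:
  assumes C: "C \<in> carrier (F Mod N)"
  shows "the_elem (amalg_phi Gs ` C) = C"
proof -
  obtain x where "x \<in> C"
    using C group.rcos_self[OF group_F _ subgroup_N] by (auto simp: carrier_FactGroup)
  then have "amalg_phi Gs ` C = {C}"
    using phi_eq_iff[OF C] coset_subset[OF C] by blast
  then show ?thesis by simp
qed

end

theorem mainTheorem4:
  fixes Gs :: "'i \<Rightarrow> 'a monoid"
    and ds :: "'i \<Rightarrow> 'a \<Rightarrow> 'a \<Rightarrow> real"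
    and A :: "'a set"
  assumes groups: "\<And>l. group (Gs l)"
    and metrics: "\<And>l. inv_metric (Gs l) (ds l)"
    and subgrp: "\<And>l. subgroup A (Gs l)"
    and common_mult: "\<And>l1 l2 a b. a \<in> A \<Longrightarrow> b \<in> A \<Longrightarrow> a \<otimes>\<^bsub>Gs l1\<^esub> b = a \<otimes>\<^bsub>Gs l2\<^esub> b"
    and closed: "\<And>l. metric_closed_in (carrier (Gs l)) (ds l) A"
    and inter: "\<And>l1 l2. l1 \<noteq> l2 \<Longrightarrow> carrier (Gs l1) \<inter> carrier (Gs l2) = A"
    and agree: "\<And>l1 l2 a b. a \<in> A \<Longrightarrow> b \<in> A \<Longrightarrow> ds l1 a b = ds l2 a b"
  shows "let F = FG Gs; P = amalg_prod Gs; \<phi> = amalg_phi Gs; N = kernel F P \<phi>;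
             dF = graev_free (amalg_set Gs) (amalg_unit Gs) (amalg_dist Gs ds A);
             \<psi> = (\<lambda>C. the_elem (\<phi> ` C))
         in \<psi> \<in> iso (F Mod N) P \<and>
            (\<forall>C1\<in>carrier (F Mod N). \<forall>C2\<in>carrier (F Mod N).
               graev_amalg Gs ds A (\<psi> C1) (\<psi> C2) = factor_metric dF C1 C2)"
proof -
  interpret amalg Gs ds A
    by (rule amalg.intro[OF groups metrics subgrp common_mult inter agree])
  let ?\<psi> = "\<lambda>C. the_elem (amalg_phi Gs ` C)"
  have "?\<psi> \<in> iso (F Mod N) (F Mod N)"
    using induced_iso_id group.is_monoid[OF normal.factorgroup_is_group[OF normal_N]]
    by (intro iso_identity_on_carrier)
  moreover have "\<forall>C1\<in>carrier (F Mod N). \<forall>C2\<in>carrier (F Mod N).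
      graev_amalg Gs ds A (?\<psi> C1) (?\<psi> C2) = factor_metric dF C1 C2"
    using induced_iso_id graev_amalg_eq_factor_metric by simp
  ultimately show ?thesis
    unfolding Let_def kernel_N by (simp add: amalg_prod_def)
qed

end
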